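(* Let $h>0$, $\mathbb{T}:=\{0,h,2h,\ldots\}$, $n\in\mathbb{N}$, and $p_0,\ldots,p_{n-1}\in\mathbb{C}\setminus\{-\tfrac1h\}$; define $p:\mathbb{T}\to\mathbb{C}$ by $p(t)=p_k$ if $\tfrac th\equiv k\pmod n$, where $p$ is periodic with period $n$ and not periodic with any smaller period. Let $E:=\prod_{i=0}^{n-1}|1+hp_i|$ and assume $0<E\ne1$. For $k\in\{0,\ldots,n-1\}$ let $S_k:=\sum_{j=1}^{n}\left(\prod_{i=0}^{j-1}|1+hp_{(k+i)\bmod n}|\right)^{-1}$. Then the equation $\Delta_hx(t)-p(t)x(t)=0$, $t\in\mathbb{T}$, with $\Delta_hx(t):=\frac{x(t+h)-x(t)}{h}$, has Ulam stability on $\mathbb{T}$ with Ulam stability constant $$K_0:=\frac{hE}{|1-E|}\max\{S_0,S_1,\ldots,S_{n-1}\}.$$ Moreover, if $E>1$, then $K_0$ is the minimum Ulam stability constant for this equation.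
   Context: A constant $K>0$ is an Ulam stability constant for the equation on $\mathbb{T}$ if for every $\varepsilon>0$ and every $\phi:\mathbb{T}\to\mathbb{C}$ with $|\Delta_h\phi(t)-p(t)\phi(t)|\le\varepsilon$ for all $t\in\mathbb{T}$, there is a solution $x$ with $|\phi(t)-x(t)|\le K\varepsilon$ for all $t\in\mathbb{T}$; the equation has Ulam stability if such $K$ exists. "Minimum" means no positive number smaller than $K_0$ is an Ulam stability constant. Note $E=|e_p(nh)|$ where $e_p(t)=\prod_{j=0}^{t/h-1}(1+hp(jh))$. *)

theory Defs
  imports Complex_Main
begin

definition Tset :: "real \<Rightarrow> real set" where
  "Tset h = {real k * h | k. True}"

definition Delta_h :: "real \<Rightarrow> (real \<Rightarrow> complex) \<Rightarrow> real \<Rightarrow> complex" where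
  "Delta_h h x t = (x (t + h) - x t) / complex_of_real h"

definition pfun :: "real \<Rightarrow> nat \<Rightarrow> (nat \<Rightarrow> complex) \<Rightarrow> real \<Rightarrow> complex" where
  "pfun h n pk t = pk (nat \<lfloor>t / h\<rfloor> mod n)"

definition ulam_constant :: "real \<Rightarrow> (real \<Rightarrow> complex) \<Rightarrow> real \<Rightarrow> bool" where
  "ulam_constant h p K \<longleftrightarrow> K > 0 \<and>
     (\<forall>\<epsilon>>0. \<forall>\<phi> :: real \<Rightarrow> complex.
        (\<forall>t\<in>Tset h. cmod (Delta_h h \<phi> t - p t * \<phi> t) \<le> \<epsilon>) \<longrightarrow>
        (\<exists>x :: real \<Rightarrow> complex. (\<forall>t\<in>Tset h. Delta_h h x t - p t * x t = 0) \<and>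
             (\<forall>t\<in>Tset h. cmod (\<phi> t - x t) \<le> K * \<epsilon>)))"

definition ulam_stable :: "real \<Rightarrow> (real \<Rightarrow> complex) \<Rightarrow> bool" where
  "ulam_stable h p \<longleftrightarrow> (\<exists>K. ulam_constant h p K)"

definition ulam_min_constant :: "real \<Rightarrow> (real \<Rightarrow> complex) \<Rightarrow> real \<Rightarrow> bool" where
  "ulam_min_constant h p K0 \<longleftrightarrow> ulam_constant h p K0 \<and>
     (\<forall>K. 0 < K \<and> K < K0 \<longrightarrow> \<not> ulam_constant h p K)"

end

theory Submission
  imports Defs
begin

(* On the grid t = k h the equation is the recurrence x (k+1) = a k * x k with
   a k = 1 + h p_(k mod n); its solutions are c * e k with e k = a 0 * ... * a (k-1), and phi is an
   eps-approximate solution iff |phi (k+1) - a k * phi k| <= h eps for all k.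
   If E < 1, the solution with the same initial value as phi stays within h eps R k, because
   R k = E S_k / (1 - E) satisfies R (k+1) = |a k| R k + 1.
   If E > 1, the series of 1 / |e (j+1)| converges, being geometric over periods, and the solution with
   c = phi 0 + sum_j (phi (j+1) - a j phi j) / e (j+1) stays within h eps times the tail
   sum_j 1 / |a m ... a (m+j)| = E S_m / (E - 1).  The perturbation h e k sum_(j<k) 1 / |e (j+1)|
   shows that this is sharp: the only solution at bounded distance from it is the one with
   c = h sum_j 1 / |e (j+1)|, and its distance at k = m is exactly h E S_m / (E - 1). *)

section \<open>Perturbed first-order linear recurrences\<close>

lemma prod_lessThan_add:
  fixes f :: "nat \<Rightarrow> 'a::comm_monoid_mult"
  shows "(\<Prod>i<m + l. f i) = (\<Prod>i<m. f i) * (\<Prod>i<l. f (m + i))"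
  by (induction l) (simp_all add: mult.assoc)

lemma forward_perturbation_bound:
  fixes a \<phi> :: "nat \<Rightarrow> 'a::real_normed_field"
  assumes step: "\<And>k. norm (\<phi> (Suc k) - a k * \<phi> k) \<le> \<delta>"
    and R_0: "0 \<le> R 0"
    and R_step: "\<And>k. norm (a k) * R k + 1 \<le> R (Suc k)"
  shows "norm (\<phi> m - \<phi> 0 * (\<Prod>i<m. a i)) \<le> \<delta> * R m"
proof -
  have "0 \<le> \<delta>"
    using norm_ge_zero order_trans step by blast
  show ?thesis
  proof (induction m)
    case 0
    show ?case
      using \<open>0 \<le> \<delta>\<close> R_0 by simp
  next
    case (Suc m)
    have "\<phi> (Suc m) - \<phi> 0 * (\<Prod>i<Suc m. a i)
        = (\<phi> (Suc m) - a m * \<phi> m) + a m * (\<phi> m - \<phi> 0 * (\<Prod>i<m. a i))"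
      by (simp add: algebra_simps)
    then have "norm (\<phi> (Suc m) - \<phi> 0 * (\<Prod>i<Suc m. a i)) \<le> \<delta> + norm (a m) * (\<delta> * R m)"
      by (metis Suc.IH add_mono norm_ge_zero norm_mult norm_triangle_le step mult_left_mono)
    also have "\<dots> \<le> \<delta> * R (Suc m)"
      using mult_left_mono[OF R_step \<open>0 \<le> \<delta>\<close>] by (simp add: algebra_simps)
    finally show ?case .
  qed
qed

definition tail_gain :: "(nat \<Rightarrow> 'a::real_normed_field) \<Rightarrow> nat \<Rightarrow> real" where
  "tail_gain a m = (\<Sum>j. inverse (\<Prod>i\<le>j. norm (a (m + i))))"

lemma tail_gain_conv_scaled_tail:
  fixes a :: "nat \<Rightarrow> 'a::real_normed_field"
  assumes nonzero: "\<And>k. a k \<noteq> 0"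
    and summable: "summable (\<lambda>j. inverse (\<Prod>i\<le>j. norm (a i)))"
  shows "norm (\<Prod>i<m. a i) * (\<Sum>l. inverse (\<Prod>i\<le>l + m. norm (a i))) = tail_gain a m"
proof -
  have "norm (\<Prod>i<m. a i) * inverse (\<Prod>i\<le>l + m. norm (a i)) = inverse (\<Prod>i\<le>l. norm (a (m + i)))" for l
    using nonzero prod_lessThan_add[of "\<lambda>i. norm (a i)" m "Suc l"]
    by (simp add: lessThan_Suc_atMost add.commute prod_norm)
  moreover have "summable (\<lambda>l. inverse (\<Prod>i\<le>l + m. norm (a i)))"
    by (rule summable_ignore_initial_segment[OF summable])
  ultimately show ?thesis
    unfolding tail_gain_def by (simp flip: suminf_mult)
qed

lemma backward_perturbation_bound:
  fixes a \<phi> :: "nat \<Rightarrow> 'a::{real_normed_field,banach}"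
  assumes step: "\<And>k. norm (\<phi> (Suc k) - a k * \<phi> k) \<le> \<delta>"
    and nonzero: "\<And>k. a k \<noteq> 0"
    and summable: "summable (\<lambda>j. inverse (\<Prod>i\<le>j. norm (a i)))"
  shows "\<exists>c. \<forall>m. norm (\<phi> m - c * (\<Prod>i<m. a i)) \<le> \<delta> * tail_gain a m"
proof -
  define e where "e m = (\<Prod>i<m. a i)" for m
  define u where "u j = inverse (\<Prod>i\<le>j. norm (a i))" for j
  define g where "g j = (\<phi> (Suc j) - a j * \<phi> j) / e (Suc j)" for j
  have e_nonzero: "e m \<noteq> 0" for m
    using nonzero by (simp add: e_def)
  have norm_e_Suc: "norm (e (Suc j)) = (\<Prod>i\<le>j. norm (a i))" for j
    unfolding e_def lessThan_Suc_atMost prod_norm ..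
  have norm_g: "norm (g j) \<le> \<delta> * u j" for j
  proof -
    have "norm (g j) = norm (\<phi> (Suc j) - a j * \<phi> j) / norm (e (Suc j))"
      by (simp add: g_def norm_divide)
    also have "\<dots> \<le> \<delta> / norm (e (Suc j))"
      by (intro divide_right_mono step) simp
    finally show ?thesis
      by (simp add: u_def norm_e_Suc divide_inverse)
  qed
  have summable_g: "summable g"
    using summable_comparison_test'[OF summable_mult[OF summable[folded u_def]] norm_g] .
  have telescope: "\<phi> m / e m = \<phi> 0 + (\<Sum>j<m. g j)" for m
  proof (induction m)
    case (Suc m)
    have "\<phi> (Suc m) / e (Suc m) = \<phi> m / e m + g m"
      using e_nonzero[of m] nonzero[of m] by (simp add: g_def e_def field_simps)
    then show ?case using Suc by simp
  qed (simp add: e_def)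
  define c where "c = \<phi> 0 + suminf g"
  have "norm (\<phi> m - c * e m) \<le> \<delta> * tail_gain a m" for m
  proof -
    have "\<phi> m - c * e m = e m * (\<phi> m / e m - c)"
      using e_nonzero[of m] by (simp add: field_simps)
    also have "\<dots> = - e m * (\<Sum>l. g (l + m))"
      unfolding telescope c_def suminf_split_initial_segment[OF summable_g, of m] by simp
    finally have "norm (\<phi> m - c * e m) = norm (e m) * norm (\<Sum>l. g (l + m))"
      by (simp add: norm_mult)
    also have "\<dots> \<le> norm (e m) * (\<Sum>l. \<delta> * u (l + m))"
      by (intro mult_left_mono norm_suminf_le summable_mult summable_ignore_initial_segment
          summable[folded u_def] norm_g) simp
    also have "\<dots> = \<delta> * (norm (e m) * (\<Sum>l. u (l + m)))"
      by (simp add: suminf_mult summable_ignore_initial_segment summable[folded u_def])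
    also have "\<dots> = \<delta> * tail_gain a m"
      unfolding u_def e_def tail_gain_conv_scaled_tail[OF nonzero summable] ..
    finally show ?thesis .
  qed
  then show ?thesis
    unfolding e_def by blast
qed

lemma backward_perturbation_bound_sharp:
  fixes a :: "nat \<Rightarrow> 'a::{real_normed_field,banach}"
  assumes nonzero: "\<And>k. a k \<noteq> 0"
    and summable: "summable (\<lambda>j. inverse (\<Prod>i\<le>j. norm (a i)))"
    and "0 \<le> \<delta>"
  obtains \<psi> where "\<And>k. norm (\<psi> (Suc k) - a k * \<psi> k) = \<delta>"
    and "\<And>c K m. (\<And>k. norm (\<psi> k - c * (\<Prod>i<k. a i)) \<le> K) \<Longrightarrow> \<delta> * tail_gain a m \<le> K"
proof
  define e where "e m = (\<Prod>i<m. a i)" for m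
  define u where "u j = inverse (\<Prod>i\<le>j. norm (a i))" for j
  define U where "U m = \<delta> * (\<Sum>j<m. u j)" for m
  define \<psi> where "\<psi> m = e m * of_real (U m)" for m
  have e_nonzero: "e m \<noteq> 0" for m
    using nonzero by (simp add: e_def)
  have summable_u: "summable u"
    unfolding u_def by (rule summable)
  have u_pos: "0 < u j" for j
    using nonzero by (simp add: u_def prod_pos)
  have norm_e_Suc: "norm (e (Suc j)) = inverse (u j)" for j
    unfolding e_def u_def lessThan_Suc_atMost prod_norm by simp
  show "norm (\<psi> (Suc k) - a k * \<psi> k) = \<delta>" for k
  proof -
    have "\<psi> (Suc k) - a k * \<psi> k = e (Suc k) * of_real (\<delta> * u k)"
      by (simp add: \<psi>_def U_def e_def algebra_simps)
    then show ?thesis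
      using u_pos[of k] \<open>0 \<le> \<delta>\<close> by (simp add: norm_mult norm_e_Suc)
  qed
  fix c K m
  assume close: "\<And>k. norm (\<psi> k - c * (\<Prod>i<k. a i)) \<le> K"
  have close': "norm (e m) * norm (of_real (U m) - c) \<le> K" for m
  proof -
    have "\<psi> m - c * e m = e m * (of_real (U m) - c)"
      by (simp add: \<psi>_def algebra_simps)
    then show ?thesis
      using close[of m] by (simp add: e_def norm_mult)
  qed
  have "(\<lambda>m. inverse (norm (e m))) \<longlonglongrightarrow> 0"
  proof (rule LIMSEQ_imp_Suc)
    show "(\<lambda>m. inverse (norm (e (Suc m)))) \<longlonglongrightarrow> 0"
      using summable_LIMSEQ_zero[OF summable_u] by (simp add: norm_e_Suc)
  qed
  then have "(\<lambda>m. of_real (U m) - c) \<longlonglongrightarrow> 0"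
  proof (rule tendsto_0_le, intro always_eventually allI)
    fix m
    show "norm (of_real (U m) - c) \<le> norm (inverse (norm (e m))) * K"
      using close'[of m] e_nonzero[of m] by (simp add: field_simps)
  qed
  moreover have "(\<lambda>m. of_real (U m) :: 'a) \<longlonglongrightarrow> of_real (\<delta> * suminf u)"
    unfolding U_def by (intro tendsto_of_real tendsto_mult_left summable_LIMSEQ summable_u)
  ultimately have c_eq: "c = of_real (\<delta> * suminf u)"
    by (metis LIM_zero_cancel LIMSEQ_unique)
  have "\<delta> * tail_gain a m = norm (e m) * norm (of_real (U m) - c)"
  proof -
    have "of_real (U m) - c = - of_real (\<delta> * (\<Sum>l. u (l + m)))"
      unfolding c_eq U_def suminf_split_initial_segment[OF summable_u, of m]
      by (simp add: algebra_simps)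
    moreover have "0 \<le> (\<Sum>l. u (l + m))"
      using u_pos by (intro suminf_nonneg summable_ignore_initial_segment summable_u)
        (simp add: less_imp_le)
    ultimately show ?thesis
      using \<open>0 \<le> \<delta>\<close> tail_gain_conv_scaled_tail[OF nonzero summable, of m]
      by (simp add: u_def e_def norm_mult)
  qed
  then show "\<delta> * tail_gain a m \<le> K"
    using close' by simp
qed

section \<open>Periodic moduli\<close>

lemma sum_lessThan_add:
  fixes f :: "nat \<Rightarrow> 'a::comm_monoid_add"
  shows "(\<Sum>i<m + l. f i) = (\<Sum>i<m. f i) + (\<Sum>i<l. f (m + i))"
  by (induction l) (simp_all add: add.assoc)

lemma sums_of_block_partial_sums:
  fixes f :: "nat \<Rightarrow> real"
  assumes nonneg: "\<And>j. 0 \<le> f j" and "0 < n"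
    and blocks: "(\<lambda>r. \<Sum>j<r * n. f j) \<longlonglongrightarrow> s"
  shows "f sums s"
proof -
  have mono: "(\<Sum>j<m. f j) \<le> (\<Sum>j<m'. f j)" if "m \<le> m'" for m m'
    using that nonneg by (intro sum_mono2) auto
  have "incseq (\<lambda>r. \<Sum>j<r * n. f j)"
    by (intro incseq_SucI mono) simp
  then have "(\<Sum>j<r * n. f j) \<le> s" for r
    using blocks by (rule incseq_le)
  moreover have "(\<Sum>j<m. f j) \<le> (\<Sum>j<m * n. f j)" for m
    using \<open>0 < n\<close> by (intro mono) simp
  ultimately have "(\<Sum>j<m. f j) \<le> s" for m
    by (meson order_trans)
  then have "summable f"
    using nonneg by (intro summableI_nonneg_bounded)
  moreover have "(\<lambda>r. \<Sum>j<r * n. f j) \<longlonglongrightarrow> suminf f"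
    using LIMSEQ_subseq_LIMSEQ[OF summable_LIMSEQ[OF \<open>summable f\<close>], of "\<lambda>r. r * n"]
      \<open>0 < n\<close> by (simp add: strict_mono_def o_def)
  ultimately show ?thesis
    using blocks LIMSEQ_unique sums_iff by blast
qed

locale periodic_moduli =
  fixes b :: "nat \<Rightarrow> real" and n :: nat
  assumes period_pos: "0 < n" and pos: "\<And>i. 0 < b i" and periodic: "\<And>i. b (i + n) = b i"
begin

definition E :: real where
  "E = (\<Prod>i<n. b i)"

definition S :: "nat \<Rightarrow> real" where
  "S k = (\<Sum>j=1..n. inverse (\<Prod>i<j. b (k + i)))"

lemma E_pos: "0 < E"
  using pos by (simp add: E_def prod_pos)

lemma periodic_mult: "b (i + r * n) = b i"
proof (induction r)
  case (Suc r)
  then show ?case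
    using periodic[of "i + r * n"] by (simp add: add.assoc add.commute[of n])
qed simp

lemma periodic_mod: "b (i mod n) = b i"
  using periodic_mult[of "i mod n" "i div n"] by simp

lemma prod_period: "(\<Prod>i<n. b (k + i)) = E"
proof (induction k)
  case 0
  then show ?case by (simp add: E_def)
next
  case (Suc k)
  have "b k * (\<Prod>i<n. b (Suc k + i)) = (\<Prod>i<Suc n. b (k + i))"
    by (subst prod.lessThan_Suc_shift) simp
  also have "\<dots> = (\<Prod>i<n. b (k + i)) * b k"
    using periodic[of k] by (simp add: add.commute)
  finally show ?case
    using Suc pos[of k] by simp
qed

lemma prod_periods: "(\<Prod>i<r * n + l. b (k + i)) = E ^ r * (\<Prod>i<l. b (k + i))"
proof -
  have "(\<Prod>i<r * n. b (k + i)) = E ^ r"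
  proof (induction r)
    case (Suc r)
    have "(\<Prod>i<Suc r * n. b (k + i)) = (\<Prod>i<r * n + n. b (k + i))"
      by (simp add: add.commute)
    also have "\<dots> = E ^ r * E"
      using prod_period[of "k + r * n"] by (simp add: prod_lessThan_add Suc add.assoc)
    finally show ?case
      by simp
  qed simp
  moreover have "b (k + (r * n + i)) = b (k + i)" for i
    using periodic_mult[of "k + i" r] by (simp add: algebra_simps)
  ultimately show ?thesis
    by (simp add: prod_lessThan_add)
qed

lemma S_conv_atMost: "S k = (\<Sum>l<n. inverse (\<Prod>i\<le>l. b (k + i)))"
  unfolding S_def One_nat_def sum.atLeast1_atMost_eq lessThan_Suc_atMost ..

lemma S_pos: "0 < S k"
  unfolding S_conv_atMost using period_pos pos by (auto intro!: sum_pos prod_pos)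

lemma S_mod: "S (k mod n) = S k"
proof -
  have "b (k mod n + i) = b (k + i)" for i
    by (metis periodic_mod mod_add_left_eq)
  then show ?thesis
    by (simp add: S_def)
qed

lemma S_le_Max: "S k \<le> Max (S ` {..<n})"
  using period_pos by (subst S_mod[symmetric]) (intro Max_ge; simp)

lemma Max_S_attained: "\<exists>k<n. S k = Max (S ` {..<n})"
proof -
  have "Max (S ` {..<n}) \<in> S ` {..<n}"
    using period_pos by (intro Max_in) auto
  then show ?thesis
    by auto
qed

lemma S_Suc: "S (Suc k) = b k * S k + inverse E - 1"
proof -
  have "b k * inverse (\<Prod>i\<le>l. b (k + i)) = inverse (\<Prod>i<l. b (Suc k + i))" for l
    using pos[of k] by (simp add: lessThan_Suc_atMost[symmetric] prod.lessThan_Suc_shift del: prod.lessThan_Suc)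
  then have "b k * S k = (\<Sum>l<n. inverse (\<Prod>i<l. b (Suc k + i)))"
    by (simp add: S_conv_atMost sum_distrib_left)
  also have "\<dots> = (\<Sum>l<Suc n. inverse (\<Prod>i<l. b (Suc k + i))) - inverse E"
    using prod_period[of "Suc k"] by simp
  also have "(\<Sum>l<Suc n. inverse (\<Prod>i<l. b (Suc k + i))) = 1 + S (Suc k)"
    by (subst sum.lessThan_Suc_shift) (simp add: S_conv_atMost lessThan_Suc_atMost)
  finally show ?thesis
    by simp
qed

lemma forward_gain_Suc:
  assumes "E < 1"
  shows "b k * (E * S k / (1 - E)) + 1 = E * S (Suc k) / (1 - E)"
  using assms E_pos by (simp add: S_Suc field_simps)

lemma tail_series_sums:
  assumes "1 < E"
  shows "(\<lambda>j. inverse (\<Prod>i\<le>j. b (k + i))) sums (E * S k / (E - 1))"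
proof -
  define f where "f j = inverse (\<Prod>i\<le>j. b (k + i))" for j
  have shift: "f (r * n + l) = inverse E ^ r * f l" for r l
    using prod_periods[where r = r and l = "Suc l" and k = k]
    by (simp add: f_def lessThan_Suc_atMost[symmetric] power_inverse del: prod.lessThan_Suc)
  have S_f: "S k = (\<Sum>l<n. f l)"
    by (simp add: S_conv_atMost f_def)
  have blocks: "(\<Sum>j<r * n. f j) = S k * (\<Sum>q<r. inverse E ^ q)" for r
  proof (induction r)
    case (Suc r)
    have "(\<Sum>j<Suc r * n. f j) = (\<Sum>j<r * n + n. f j)"
      by (simp add: add.commute)
    also have "\<dots> = S k * (\<Sum>q<r. inverse E ^ q) + inverse E ^ r * S k"
      by (simp add: sum_lessThan_add Suc shift S_f sum_distrib_left)
    finally show ?case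
      by (simp add: algebra_simps)
  qed simp
  have "(\<lambda>q. inverse E ^ q) sums (1 / (1 - inverse E))"
    using assms E_pos by (intro geometric_sums) (simp add: inverse_less_1_iff)
  then have "(\<lambda>r. \<Sum>j<r * n. f j) \<longlonglongrightarrow> S k * (1 / (1 - inverse E))"
    unfolding blocks sums_def by (intro tendsto_mult_left)
  also have "S k * (1 / (1 - inverse E)) = E * S k / (E - 1)"
    using assms by (simp add: field_simps)
  finally show ?thesis
    unfolding f_def using period_pos pos
    by (intro sums_of_block_partial_sums) (auto intro: prod_nonneg less_imp_le)
qed

end

section \<open>The difference equation on the time scale\<close>

lemma Tset_eq_range: "Tset h = range (\<lambda>k. real k * h)"
  by (auto simp: Tset_def)

definition grid_factor :: "real \<Rightarrow> (real \<Rightarrow> complex) \<Rightarrow> nat \<Rightarrow> complex" where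
  "grid_factor h p k = 1 + of_real h * p (real k * h)"

lemma Delta_h_residual_on_grid:
  assumes "0 < h"
  shows "Delta_h h x (real k * h) - p (real k * h) * x (real k * h)
       = (x (real (Suc k) * h) - grid_factor h p k * x (real k * h)) / of_real h"
proof -
  have "real k * h + h = real (Suc k) * h"
    by (simp add: algebra_simps)
  then show ?thesis
    using assms by (simp add: Delta_h_def grid_factor_def field_simps)
qed

lemma solution_on_grid_iff:
  assumes "0 < h"
  shows "(\<forall>t\<in>Tset h. Delta_h h x t - p t * x t = 0)
     \<longleftrightarrow> (\<forall>k. x (real k * h) = x 0 * (\<Prod>i<k. grid_factor h p i))"
proof -
  have "(\<forall>t\<in>Tset h. Delta_h h x t - p t * x t = 0)
     \<longleftrightarrow> (\<forall>k. x (real (Suc k) * h) = grid_factor h p k * x (real k * h))"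
  proof -
    have "Delta_h h x (real k * h) - p (real k * h) * x (real k * h) = 0
      \<longleftrightarrow> x (real (Suc k) * h) = grid_factor h p k * x (real k * h)" for k
      unfolding Delta_h_residual_on_grid[OF assms] using assms by simp
    then show ?thesis
      by (auto simp: Tset_eq_range)
  qed
  also have "\<dots> \<longleftrightarrow> (\<forall>k. x (real k * h) = x 0 * (\<Prod>i<k. grid_factor h p i))"
  proof
    assume step: "\<forall>k. x (real (Suc k) * h) = grid_factor h p k * x (real k * h)"
    show "\<forall>k. x (real k * h) = x 0 * (\<Prod>i<k. grid_factor h p i)"
    proof
      fix k
      show "x (real k * h) = x 0 * (\<Prod>i<k. grid_factor h p i)"
        by (induction k) (use step in \<open>simp_all del: of_nat_Suc\<close>)
    qed
  next
    assume "\<forall>k. x (real k * h) = x 0 * (\<Prod>i<k. grid_factor h p i)"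
    then show "\<forall>k. x (real (Suc k) * h) = grid_factor h p k * x (real k * h)"
      by (metis (no_types, lifting) mult.commute mult.left_commute prod.lessThan_Suc)
  qed
  finally show ?thesis .
qed

lemma approximate_solution_on_grid_iff:
  assumes "0 < h"
  shows "(\<forall>t\<in>Tset h. cmod (Delta_h h \<phi> t - p t * \<phi> t) \<le> \<epsilon>)
     \<longleftrightarrow> (\<forall>k. cmod (\<phi> (real (Suc k) * h) - grid_factor h p k * \<phi> (real k * h)) \<le> h * \<epsilon>)"
proof -
  have "cmod (Delta_h h \<phi> (real k * h) - p (real k * h) * \<phi> (real k * h)) \<le> \<epsilon>
    \<longleftrightarrow> cmod (\<phi> (real (Suc k) * h) - grid_factor h p k * \<phi> (real k * h)) \<le> h * \<epsilon>" for k
    unfolding Delta_h_residual_on_grid[OF assms] using assms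
    by (simp add: norm_divide field_simps del: of_nat_Suc)
  then show ?thesis
    by (simp add: Tset_eq_range)
qed

lemma ulam_constant_iff_recurrence:
  assumes "0 < h"
  shows "ulam_constant h p K \<longleftrightarrow> 0 < K \<and> (\<forall>\<epsilon>>0. \<forall>\<phi> :: nat \<Rightarrow> complex.
           (\<forall>k. cmod (\<phi> (Suc k) - grid_factor h p k * \<phi> k) \<le> h * \<epsilon>) \<longrightarrow>
           (\<exists>c. \<forall>k. cmod (\<phi> k - c * (\<Prod>i<k. grid_factor h p i)) \<le> K * \<epsilon>))"
proof -
  have grid_index: "nat \<lfloor>real k * h / h\<rfloor> = k" for k
    using assms by simp
  show ?thesis
  proof (intro iffI conjI allI impI)
    assume ulam: "ulam_constant h p K"
    then show "0 < K"
      by (simp add: ulam_constant_def)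
    fix \<epsilon> :: real and \<phi> :: "nat \<Rightarrow> complex"
    assume "0 < \<epsilon>" and "\<forall>k. cmod (\<phi> (Suc k) - grid_factor h p k * \<phi> k) \<le> h * \<epsilon>"
    then have "\<forall>t\<in>Tset h. cmod (Delta_h h (\<lambda>t. \<phi> (nat \<lfloor>t / h\<rfloor>)) t
        - p t * \<phi> (nat \<lfloor>t / h\<rfloor>)) \<le> \<epsilon>"
      unfolding approximate_solution_on_grid_iff[OF assms] grid_index by blast
    then obtain x where "\<forall>t\<in>Tset h. Delta_h h x t - p t * x t = 0"
      and close: "\<forall>t\<in>Tset h. cmod (\<phi> (nat \<lfloor>t / h\<rfloor>) - x t) \<le> K * \<epsilon>"
      using ulam \<open>0 < \<epsilon>\<close> unfolding ulam_constant_def by blast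
    then have "x (real k * h) = x 0 * (\<Prod>i<k. grid_factor h p i)" for k
      using solution_on_grid_iff[OF assms] by blast
    then show "\<exists>c. \<forall>k. cmod (\<phi> k - c * (\<Prod>i<k. grid_factor h p i)) \<le> K * \<epsilon>"
      using close grid_index by (auto simp: Tset_eq_range)
  next
    assume "0 < K \<and> (\<forall>\<epsilon>>0. \<forall>\<phi> :: nat \<Rightarrow> complex.
           (\<forall>k. cmod (\<phi> (Suc k) - grid_factor h p k * \<phi> k) \<le> h * \<epsilon>) \<longrightarrow>
           (\<exists>c. \<forall>k. cmod (\<phi> k - c * (\<Prod>i<k. grid_factor h p i)) \<le> K * \<epsilon>))"
    then have "0 < K" and recurrence: "\<And>\<epsilon> \<phi>. 0 < \<epsilon> \<Longrightarrow>
           (\<forall>k. cmod (\<phi> (Suc k) - grid_factor h p k * \<phi> k) \<le> h * \<epsilon>) \<Longrightarrow>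
           (\<exists>c. \<forall>k. cmod (\<phi> k - c * (\<Prod>i<k. grid_factor h p i)) \<le> K * \<epsilon>)"
      by blast+
    show "ulam_constant h p K"
      unfolding ulam_constant_def
    proof (intro conjI allI impI \<open>0 < K\<close>)
      fix \<epsilon> :: real and \<phi> :: "real \<Rightarrow> complex"
      assume "0 < \<epsilon>" and "\<forall>t\<in>Tset h. cmod (Delta_h h \<phi> t - p t * \<phi> t) \<le> \<epsilon>"
      then obtain c where close: "\<forall>k. cmod (\<phi> (real k * h) - c * (\<Prod>i<k. grid_factor h p i)) \<le> K * \<epsilon>"
        using recurrence[of \<epsilon> "\<lambda>k. \<phi> (real k * h)"]
        unfolding approximate_solution_on_grid_iff[OF assms] by auto
      define x where "x t = c * (\<Prod>i<nat \<lfloor>t / h\<rfloor>. grid_factor h p i)" for t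
      have "\<forall>t\<in>Tset h. Delta_h h x t - p t * x t = 0"
        unfolding solution_on_grid_iff[OF assms] using assms by (simp add: x_def grid_index)
      moreover have "\<forall>t\<in>Tset h. cmod (\<phi> t - x t) \<le> K * \<epsilon>"
        using close assms by (auto simp: Tset_eq_range x_def grid_index)
      ultimately show "\<exists>x. (\<forall>t\<in>Tset h. Delta_h h x t - p t * x t = 0)
          \<and> (\<forall>t\<in>Tset h. cmod (\<phi> t - x t) \<le> K * \<epsilon>)"
        by blast
    qed
  qed
qed

locale periodic_difference_equation =
  fixes h :: real and n :: nat and pk :: "nat \<Rightarrow> complex"
  assumes h_pos: "0 < h" and n_pos: "0 < n"
    and pk_ne: "\<forall>i<n. pk i \<noteq> - (1 / complex_of_real h)"
begin

abbreviation factor :: "nat \<Rightarrow> complex" where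
  "factor \<equiv> grid_factor h (pfun h n pk)"

lemma factor_eq: "factor k = 1 + complex_of_real h * pk (k mod n)"
  using h_pos by (simp add: grid_factor_def pfun_def)

lemma factor_nonzero: "factor k \<noteq> 0"
proof
  assume "factor k = 0"
  then have "pk (k mod n) = - (1 / complex_of_real h)"
    using h_pos by (simp add: factor_eq field_simps add_eq_0_iff)
  then show False
    using pk_ne n_pos by simp
qed

sublocale periodic_moduli "\<lambda>k. cmod (factor k)" n
  using n_pos factor_nonzero by unfold_locales (simp_all add: factor_eq)

definition K0 :: real where
  "K0 = h * E / \<bar>1 - E\<bar> * Max (S ` {..<n})"

lemma tail_gain_factor:
  assumes "1 < E"
  shows "summable (\<lambda>j. inverse (\<Prod>i\<le>j. cmod (factor i)))"
    and "tail_gain factor k = E * S k / (E - 1)"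
  using tail_series_sums[OF assms, of 0] tail_series_sums[OF assms, of k]
  by (auto simp: tail_gain_def sums_iff)

lemma ulam_constant_K0:
  assumes "E \<noteq> 1"
  shows "ulam_constant h (pfun h n pk) K0"
  unfolding ulam_constant_iff_recurrence[OF h_pos]
proof (intro conjI allI impI)
  have "0 < Max (S ` {..<n})"
    using Max_S_attained S_pos by metis
  then show "0 < K0"
    using h_pos E_pos assms by (simp add: K0_def)
  fix \<epsilon> :: real and \<phi> :: "nat \<Rightarrow> complex"
  assume "0 < \<epsilon>" and step: "\<forall>k. cmod (\<phi> (Suc k) - factor k * \<phi> k) \<le> h * \<epsilon>"
  have "\<exists>c. \<forall>k. cmod (\<phi> k - c * (\<Prod>i<k. factor i)) \<le> h * \<epsilon> * (E * S k / \<bar>1 - E\<bar>)"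
  proof (cases "E < 1")
    case True
    have "cmod (factor k) * (E * S k / (1 - E)) + 1 \<le> E * S (Suc k) / (1 - E)" for k
      by (rule eq_refl) (rule forward_gain_Suc[OF True])
    moreover have "0 \<le> E * S 0 / (1 - E)"
      using True E_pos S_pos[of 0] by simp
    ultimately have "cmod (\<phi> k - \<phi> 0 * (\<Prod>i<k. factor i)) \<le> h * \<epsilon> * (E * S k / (1 - E))" for k
      using step by (intro forward_perturbation_bound) auto
    with True show ?thesis
      by auto
  next
    case False
    with assms have "1 < E"
      by simp
    then show ?thesis
      using backward_perturbation_bound[OF _ factor_nonzero tail_gain_factor(1)] step
      by (simp add: tail_gain_factor(2))
  qed
  moreover have "h * \<epsilon> * (E * S k / \<bar>1 - E\<bar>) \<le> K0 * \<epsilon>" for k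
    using h_pos \<open>0 < \<epsilon>\<close> E_pos S_le_Max[of k]
    by (simp add: K0_def divide_right_mono mult_left_mono)
  ultimately show "\<exists>c. \<forall>k. cmod (\<phi> k - c * (\<Prod>i<k. factor i)) \<le> K0 * \<epsilon>"
    by (meson order_trans)
qed

lemma ulam_constant_K0_minimal:
  assumes "1 < E" and "0 < K" and "K < K0"
  shows "\<not> ulam_constant h (pfun h n pk) K"
proof
  assume "ulam_constant h (pfun h n pk) K"
  obtain \<psi> where "\<And>k. cmod (\<psi> (Suc k) - factor k * \<psi> k) = h"
    and sharp: "\<And>c K m. (\<And>k. cmod (\<psi> k - c * (\<Prod>i<k. factor i)) \<le> K) \<Longrightarrow> h * tail_gain factor m \<le> K"
    using backward_perturbation_bound_sharp[OF factor_nonzero tail_gain_factor(1)[OF \<open>1 < E\<close>]] h_pos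
    by (metis less_imp_le)
  then obtain c where close: "\<And>m. cmod (\<psi> m - c * (\<Prod>i<m. factor i)) \<le> K"
    using \<open>ulam_constant h (pfun h n pk) K\<close>
    unfolding ulam_constant_iff_recurrence[OF h_pos] by (metis mult_1_right order_refl zero_less_one)
  obtain k where "S k = Max (S ` {..<n})"
    using Max_S_attained by blast
  then have "h * tail_gain factor k = K0"
    using \<open>1 < E\<close> by (simp add: K0_def tail_gain_factor(2))
  moreover have "h * tail_gain factor k \<le> K"
    using sharp close by blast
  ultimately show False
    using \<open>K < K0\<close> by simp
qed

end

theorem theorem4p4:
  fixes h :: real and n :: nat and pk :: "nat \<Rightarrow> complex"
  assumes hpos: "h > 0"
    and npos: "n \<ge> 1"
    and pk_ne: "\<forall>i<n. pk i \<noteq> - (1 / complex_of_real h)"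
    and minper: "\<forall>m. 0 < m \<and> m < n \<longrightarrow>
                   \<not> (\<forall>t\<in>Tset h. pfun h n pk (t + real m * h) = pfun h n pk t)"
    and Epos: "0 < (\<Prod>i<n. cmod (1 + complex_of_real h * pk i))"
    and Ene1: "(\<Prod>i<n. cmod (1 + complex_of_real h * pk i)) \<noteq> 1"
  shows "ulam_stable h (pfun h n pk)
       \<and> ulam_constant h (pfun h n pk)
           (h * (\<Prod>i<n. cmod (1 + complex_of_real h * pk i))
              / \<bar>1 - (\<Prod>i<n. cmod (1 + complex_of_real h * pk i))\<bar>
            * Max ((\<lambda>k. \<Sum>j=1..n. inverse (\<Prod>i<j. cmod (1 + complex_of_real h * pk ((k + i) mod n)))) ` {..<n}))
       \<and> ((\<Prod>i<n. cmod (1 + complex_of_real h * pk i)) > 1 \<longrightarrow>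
           ulam_min_constant h (pfun h n pk)
           (h * (\<Prod>i<n. cmod (1 + complex_of_real h * pk i))
              / \<bar>1 - (\<Prod>i<n. cmod (1 + complex_of_real h * pk i))\<bar>
            * Max ((\<lambda>k. \<Sum>j=1..n. inverse (\<Prod>i<j. cmod (1 + complex_of_real h * pk ((k + i) mod n)))) ` {..<n})))"
proof -
  interpret periodic_difference_equation h n pk
    using hpos npos pk_ne by unfold_locales simp_all
  have E_eq: "(\<Prod>i<n. cmod (1 + complex_of_real h * pk i)) = E"
    unfolding E_def by (auto simp: factor_eq intro!: prod.cong)
  have S_eq: "(\<Sum>j=1..n. inverse (\<Prod>i<j. cmod (1 + complex_of_real h * pk ((k + i) mod n)))) = S k" for k
    unfolding S_def by (simp only: factor_eq)
  have "ulam_constant h (pfun h n pk) K0"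
    using Ene1 E_eq by (intro ulam_constant_K0) simp
  then show ?thesis
    unfolding E_eq S_eq K0_def[symmetric] ulam_stable_def ulam_min_constant_def
    using ulam_constant_K0_minimal by blast
qed

end
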